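(* $\operatorname{cov}(\mathcal N)\le\mathfrak b_3$ and $\operatorname{non}(\mathcal N)\ge\mathfrak d_3$.
   Context: Let $T^*$ and $\rho$ be as follows, by induction on $h\ge0$: $T^*\cap\omega^0=\{\langle\rangle\}$; $\rho(h)=\max(|T^*\cap\omega^h|,h+2)$, $\pi(h)=((h+1)^2\rho(h)^{h+1})^{\rho(h)^h}$, $a(h)=\pi(h)^{h+2}$, $M(h)=a(h)^2$, and each $s\in T^*\cap\omega^h$ has the $M(h)$ immediate successors $s^\frown\ell$, $\ell<M(h)$. Put $b(h)=(h+1)^2\rho(h)^{h+1}$. An $R_3$-parameter is a set $\mathcal E\subseteq\omega^\omega$ such that every $e\in\mathcal E$ satisfies $\lim_n e(n)=\infty$, $e(n)\le n$, $\lim_n(n-e(n))=\infty$, and there is $e'\in\mathcal E$ with $e(n)+1\le e'(n)$ for almost all $n$; moreover for every countable $\mathcal E'\subseteq\mathcal E$ there is $e\in\mathcal E$ with $e(n)\ge e'(n)$ for almost all $n$, for every $e'\in\mathcal E'$. Fix an $R_3$-parameter $\mathcal E$ of size $\aleph_1$. Let $\mathcal S=\{\psi\in\prod_h\mathcal P(b(h)):\ |\psi(h)|\le\rho(h)^h\ \forall h\}$, $\mathcal S_e=\{\phi\in\prod_h\mathcal P(b(h)):\ |\phi(h)|\le\rho(h)^{e(h)}\ \forall h\}$, and $\hat{\mathcal S}=\bigcup_{e\in\mathcal E}\mathcal S_e$. For $\psi\in\mathcal S$, $\phi\in\hat{\mathcal S}$ let $\psi\,R_3\,\phi$ iff $\phi(n)\not\subseteq\psi(n)$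 for all but finitely many $n$. Let $\mathfrak b_3$ be the least size of a set $\mathcal A\subseteq\mathcal S$ such that no $\phi\in\hat{\mathcal S}$ satisfies $\psi R_3\phi$ for all $\psi\in\mathcal A$, and $\mathfrak d_3$ the least size of $\mathcal D\subseteq\hat{\mathcal S}$ such that every $\psi\in\mathcal S$ has some $\phi\in\mathcal D$ with $\psi R_3\phi$. $\mathcal N$ is the null ideal. *)

theory Defs
  imports "HOL-Analysis.Analysis"
begin

text \<open>Levels of the tree T*: Tlev h = T* \<inter> \<omega>^h (sequences as lists of length h).
  Each node of level h has M(h) immediate successors, where M(h) is computed from
  rho(h) = max |T* \<inter> \<omega>^h| (h+2).\<close>

definition rho_of :: "nat \<Rightarrow> nat \<Rightarrow> nat" where
  "rho_of c h = max c (h + 2)"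

definition M_of :: "nat \<Rightarrow> nat \<Rightarrow> nat" where
  "M_of c h = (let r = rho_of c h;
                   p = ((h + 1)^2 * r^(h + 1))^(r^h);
                   a = p^(h + 2)
               in a^2)"

fun Tlev :: "nat \<Rightarrow> nat list set" where
  "Tlev 0 = {[]}"
| "Tlev (Suc h) = {s @ [l] | s l. s \<in> Tlev h \<and> l < M_of (card (Tlev h)) h}"

definition Tstar :: "nat list set" where
  "Tstar = (\<Union>h. Tlev h)"

definition rho :: "nat \<Rightarrow> nat" where
  "rho h = max (card {s \<in> Tstar. length s = h}) (h + 2)"

definition piT :: "nat \<Rightarrow> nat" where
  "piT h = ((h + 1)^2 * rho h ^ (h + 1)) ^ (rho h ^ h)"

definition aT :: "nat \<Rightarrow> nat" where
  "aT h = piT h ^ (h + 2)"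

definition MT :: "nat \<Rightarrow> nat" where
  "MT h = aT h ^ 2"

definition bT :: "nat \<Rightarrow> nat" where
  "bT h = (h + 1)^2 * rho h ^ (h + 1)"

definition R3_param :: "(nat \<Rightarrow> nat) set \<Rightarrow> bool" where
  "R3_param E \<longleftrightarrow>
     (\<forall>e\<in>E. filterlim e at_top sequentially
           \<and> (\<forall>n. e n \<le> n)
           \<and> filterlim (\<lambda>n. n - e n) at_top sequentially
           \<and> (\<exists>e'\<in>E. \<forall>\<^sub>F n in sequentially. e n + 1 \<le> e' n))
   \<and> (\<forall>E'. E' \<subseteq> E \<and> countable E' \<longrightarrow>
          (\<exists>e\<in>E. \<forall>e'\<in>E'. \<forall>\<^sub>F n in sequentially. e' n \<le> e n))"

text \<open>The spaces S, S_e and \<hat>S (elements of \<Prod>_h P(b(h)) as functions nat \<Rightarrow> nat set).\<close>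
definition S3 :: "(nat \<Rightarrow> nat set) set" where
  "S3 = {\<psi>. \<forall>h. \<psi> h \<subseteq> {..<bT h} \<and> card (\<psi> h) \<le> rho h ^ h}"

definition S3e :: "(nat \<Rightarrow> nat) \<Rightarrow> (nat \<Rightarrow> nat set) set" where
  "S3e e = {\<phi>. \<forall>h. \<phi> h \<subseteq> {..<bT h} \<and> card (\<phi> h) \<le> rho h ^ e h}"

definition S3hat :: "(nat \<Rightarrow> nat) set \<Rightarrow> (nat \<Rightarrow> nat set) set" where
  "S3hat E = (\<Union>e\<in>E. S3e e)"

definition R3 :: "(nat \<Rightarrow> nat set) \<Rightarrow> (nat \<Rightarrow> nat set) \<Rightarrow> bool" where
  "R3 \<psi> \<phi> \<longleftrightarrow> (\<forall>\<^sub>F n in sequentially. \<not> (\<phi> n \<subseteq> \<psi> n))"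

definition b3_witness :: "(nat \<Rightarrow> nat) set \<Rightarrow> (nat \<Rightarrow> nat set) set \<Rightarrow> bool" where
  "b3_witness E A \<longleftrightarrow> A \<subseteq> S3 \<and> \<not> (\<exists>\<phi>\<in>S3hat E. \<forall>\<psi>\<in>A. R3 \<psi> \<phi>)"

definition d3_witness :: "(nat \<Rightarrow> nat) set \<Rightarrow> (nat \<Rightarrow> nat set) set \<Rightarrow> bool" where
  "d3_witness E D \<longleftrightarrow> D \<subseteq> S3hat E \<and> (\<forall>\<psi>\<in>S3. \<exists>\<phi>\<in>D. R3 \<psi> \<phi>)"

definition covN_witness :: "real set set \<Rightarrow> bool" where
  "covN_witness C \<longleftrightarrow> C \<subseteq> null_sets lebesgue \<and> \<Union>C = UNIV"

definition nonN_witness :: "real set \<Rightarrow> bool" where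
  "nonN_witness X \<longleftrightarrow> X \<notin> null_sets lebesgue"

end

theory Submission
  imports Defs
begin

text \<open>Reading off one base-\<open>b(n)\<close> digit of a real \<open>x\<close> at every level \<open>n\<close> gives the
  selector \<open>n \<mapsto> {digit of x}\<close>, which lies in every \<open>\<S>\<^sub>e\<close>. For a fixed \<open>\<psi> \<in> \<S>\<close> the digit
  falls into \<open>\<psi>(n)\<close> with probability \<open>|\<psi>(n)|/b(n) \<le> 1/(n+1)\<^sup>2\<close>, so by Borel--Cantelli
  the reals whose selector is not \<open>R\<^sub>3\<close>-related to \<open>\<psi>\<close> form a null set. This map from the
  reals to \<open>\<hat>\<S>\<close> is a Tukey connection from \<open>\<N>\<close> to \<open>R\<^sub>3\<close>, which gives both inequalities.\<close>

definition digit :: "nat \<Rightarrow> real \<Rightarrow> nat" where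
  "digit b x = nat \<lfloor>real b * frac x\<rfloor>"

definition digit_cells :: "nat \<Rightarrow> nat set \<Rightarrow> int \<Rightarrow> real set" where
  "digit_cells b J k =
     (\<Union>j\<in>J. {real_of_int k + real j / real b ..< real_of_int k + (real j + 1) / real b})"

lemma digit_less:
  assumes "0 < b"
  shows "digit b x < b"
proof -
  have "real b * frac x < real b"
    using assms frac_lt_1[of x] by simp
  then show ?thesis
    unfolding digit_def by (simp add: floor_less_iff nat_less_iff)
qed

lemma mem_digit_cells_floor:
  assumes "0 < b" and "digit b x \<in> J"
  shows "x \<in> digit_cells b J \<lfloor>x\<rfloor>"
proof -
  define j where "j = digit b x"
  have "real j = real_of_int \<lfloor>real b * frac x\<rfloor>"
    unfolding j_def digit_def using assms(1) by (simp add: frac_ge_0)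
  then have "real j \<le> real b * frac x" and "real b * frac x < real j + 1"
    by linarith+
  then have "real j / real b \<le> frac x" and "frac x < (real j + 1) / real b"
    using assms(1) by (simp_all add: divide_simps mult.commute)
  then show ?thesis
    unfolding digit_cells_def frac_def j_def using assms(2) by (intro UN_I[of "digit b x"]) auto
qed

lemma digit_cells_subset:
  assumes "J \<subseteq> {..<b}"
  shows "digit_cells b J k \<subseteq> {real_of_int k .. real_of_int k + 1}"
proof
  fix x assume "x \<in> digit_cells b J k"
  then obtain j where "j \<in> J" and x: "real_of_int k + real j / real b \<le> x"
      "x < real_of_int k + (real j + 1) / real b"
    unfolding digit_cells_def by auto
  with assms have "(real j + 1) / real b \<le> 1"
    by (auto simp: divide_simps)
  moreover have "0 \<le> real j / real b"
    by simp
  ultimately show "x \<in> {real_of_int k .. real_of_int k + 1}"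
    using x unfolding atLeastAtMost_iff by linarith
qed

lemma measure_digit_cells_le:
  assumes "finite J" and "0 < b"
  shows "measure lborel (digit_cells b J k) \<le> real (card J) / real b"
proof -
  have "measure lborel (digit_cells b J k)
      \<le> (\<Sum>j\<in>J. measure lborel {real_of_int k + real j / real b ..< real_of_int k + (real j + 1) / real b})"
    unfolding digit_cells_def by (rule measure_UNION_le[OF assms(1)]) auto
  also have "\<dots> = (\<Sum>j\<in>J. 1 / real b)"
  proof (rule sum.cong)
    fix j
    have "real j / real b \<le> (real j + 1) / real b"
      using assms(2) by (simp add: divide_right_mono)
    then show "measure lborel {real_of_int k + real j / real b ..< real_of_int k + (real j + 1) / real b}
        = 1 / real b"
      by (simp add: add_divide_distrib)
  qed simp
  finally show ?thesis
    by simp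
qed

lemma null_sets_frequently_digit_mem:
  assumes b: "\<And>n. 0 < b n" and J: "\<And>n. J n \<subseteq> {..<b n}"
    and summable: "summable (\<lambda>n. real (card (J n)) / real (b n))"
  shows "{x. \<exists>\<^sub>F n in sequentially. digit (b n) x \<in> J n} \<in> null_sets lebesgue"
proof -
  define C where "C k n = digit_cells (b n) (J n) k" for k n
  have fin: "finite (J n)" for n
    using J finite_subset by blast
  have limsup_null: "limsup (C k) \<in> null_sets lborel" for k
  proof (rule borel_cantelli_limsup1)
    show "C k n \<in> sets lborel" for n
      using fin unfolding C_def digit_cells_def by auto
    show "emeasure lborel (C k n) < \<infinity>" for n
      unfolding C_def by (rule le_less_trans[OF emeasure_mono[OF digit_cells_subset[OF J]]]) auto
    show "summable (\<lambda>n. measure lborel (C k n))"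
      unfolding C_def
      by (rule summable_comparison_test'[OF summable]) (simp add: measure_digit_cells_le fin b)
  qed
  have "{x. \<exists>\<^sub>F n in sequentially. digit (b n) x \<in> J n} \<subseteq> (\<Union>k\<in>UNIV. limsup (C k))"
  proof
    fix x assume "x \<in> {x. \<exists>\<^sub>F n in sequentially. digit (b n) x \<in> J n}"
    then have "\<forall>N. \<exists>n\<ge>N. digit (b n) x \<in> J n"
      by (simp add: frequently_sequentially)
    then have "\<forall>N. \<exists>n\<ge>N. x \<in> C \<lfloor>x\<rfloor> n"
      unfolding C_def using mem_digit_cells_floor[OF b] by blast
    then have "x \<in> limsup (C \<lfloor>x\<rfloor>)"
      unfolding limsup_INF_SUP by blast
    then show "x \<in> (\<Union>k\<in>UNIV. limsup (C k))"
      by blast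
  qed
  moreover have "(\<Union>k\<in>UNIV. limsup (C k)) \<in> null_sets lborel"
    by (intro null_sets_UN' limsup_null) simp
  ultimately show ?thesis
    by (rule null_sets_completion_subset[OF _ null_sets_completionI])
qed

lemma rho_ge_2: "2 \<le> rho h"
  unfolding rho_def by simp

lemma bT_pos: "0 < bT h"
  using rho_ge_2[of h] unfolding bT_def by simp

lemma summable_card_div_bT:
  assumes "\<psi> \<in> S3"
  shows "summable (\<lambda>n. real (card (\<psi> n)) / real (bT n))"
proof (rule summable_comparison_test')
  have "summable (\<lambda>n. inverse (real n ^ 2))"
    by (rule inverse_power_summable) simp
  then show "summable (\<lambda>n. inverse (real (Suc n) ^ 2))"
    by (subst summable_Suc_iff)
  fix n
  define r where "r = real (rho n)"
  have r: "2 \<le> r"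
    unfolding r_def using rho_ge_2[of n] by simp
  have bT: "real (bT n) = (real (Suc n) ^ 2 * r) * r ^ n"
    unfolding bT_def r_def by simp
  have "real (card (\<psi> n)) / real (bT n) \<le> r ^ n / real (bT n)"
    using assms bT_pos[of n] unfolding S3_def r_def
    by (intro divide_right_mono) (auto simp flip: of_nat_power)
  also have "\<dots> = inverse (real (Suc n) ^ 2 * r)"
    using r unfolding bT by (simp add: divide_inverse)
  also have "\<dots> \<le> inverse (real (Suc n) ^ 2)"
    using r by (intro le_imp_inverse_le) auto
  finally show "norm (real (card (\<psi> n)) / real (bT n)) \<le> inverse (real (Suc n) ^ 2)"
    by simp
qed

definition digit_selector :: "real \<Rightarrow> nat \<Rightarrow> nat set" where
  "digit_selector x n = {digit (bT n) x}"

lemma digit_selector_in_S3e: "digit_selector x \<in> S3e e"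
proof -
  have "1 \<le> rho h ^ e h" for h
    using rho_ge_2[of h] by simp
  then show ?thesis
    unfolding S3e_def digit_selector_def by (simp add: digit_less[OF bT_pos])
qed

lemma not_R3_digit_selector_iff:
  "\<not> R3 \<psi> (digit_selector x) \<longleftrightarrow> (\<exists>\<^sub>F n in sequentially. digit (bT n) x \<in> \<psi> n)"
  unfolding R3_def digit_selector_def frequently_def by simp

lemma null_sets_not_R3_digit_selector:
  assumes "\<psi> \<in> S3"
  shows "{x. \<not> R3 \<psi> (digit_selector x)} \<in> null_sets lebesgue"
proof -
  have J: "\<psi> n \<subseteq> {..<bT n}" for n
    using assms unfolding S3_def by blast
  have "{x. \<exists>\<^sub>F n in sequentially. digit (bT n) x \<in> \<psi> n} \<in> null_sets lebesgue"
    by (rule null_sets_frequently_digit_mem[OF bT_pos J summable_card_div_bT[OF assms]])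
  then show ?thesis
    by (simp only: not_R3_digit_selector_iff)
qed

lemma R3_param_nonempty:
  assumes "R3_param E"
  shows "E \<noteq> {}"
proof -
  have "\<exists>e\<in>E. \<forall>e'\<in>{}. \<forall>\<^sub>F n in sequentially. e' n \<le> e n"
    using assms unfolding R3_param_def by (elim conjE allE[of _ "{}"]) simp
  then show ?thesis
    by blast
qed

lemma covN_witness_of_b3_witness:
  assumes "b3_witness E A" and "\<And>x. F x \<in> S3hat E"
    and "\<And>\<psi>. \<psi> \<in> S3 \<Longrightarrow> {x. \<not> R3 \<psi> (F x)} \<in> null_sets lebesgue"
  shows "covN_witness ((\<lambda>\<psi>. {x. \<not> R3 \<psi> (F x)}) ` A)"
  using assms unfolding b3_witness_def covN_witness_def by blast

lemma d3_witness_of_nonN_witness: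
  assumes "nonN_witness X" and "\<And>x. F x \<in> S3hat E"
    and "\<And>\<psi>. \<psi> \<in> S3 \<Longrightarrow> {x. \<not> R3 \<psi> (F x)} \<in> null_sets lebesgue"
  shows "d3_witness E (F ` X)"
proof -
  have "\<not> X \<subseteq> {x. \<not> R3 \<psi> (F x)}" if "\<psi> \<in> S3" for \<psi>
    using assms(1) assms(3)[OF that] null_sets_completion_subset
    unfolding nonN_witness_def by blast
  then show ?thesis
    using assms(2) unfolding d3_witness_def by blast
qed

theorem lemma2:
  fixes E :: "(nat \<Rightarrow> nat) set"
  assumes "R3_param E"
    and "(card_of E, cardSuc natLeq) \<in> ordIso"
  shows "(\<forall>A. b3_witness E A \<longrightarrow> (\<exists>C. covN_witness C \<and> (card_of C, card_of A) \<in> ordLeq))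
       \<and> (\<forall>X. nonN_witness X \<longrightarrow> (\<exists>D. d3_witness E D \<and> (card_of D, card_of X) \<in> ordLeq))"
proof -
  obtain e where "e \<in> E"
    using R3_param_nonempty[OF assms(1)] by blast
  then have selector: "digit_selector x \<in> S3hat E" for x
    unfolding S3hat_def using digit_selector_in_S3e by blast
  note null = null_sets_not_R3_digit_selector
  have "\<exists>C. covN_witness C \<and> (card_of C, card_of A) \<in> ordLeq" if "b3_witness E A" for A
    using covN_witness_of_b3_witness[OF that selector null] card_of_image by blast
  moreover have "\<exists>D. d3_witness E D \<and> (card_of D, card_of X) \<in> ordLeq" if "nonN_witness X" for X
    using d3_witness_of_nonN_witness[OF that selector null] card_of_image by blast
  ultimately show ?thesis
    by blast
qed

end
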